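(* Let $a,b,u,v$ be integers with $b>a\ge2$ and $u,v\ge2$, and set $X:=ab-a-b$. Consider the properties: (1) $a$, $b$ and $uv-1$ are pairwise coprime; (2) $\frac{1}{a}+\frac{1}{b}+\frac{v}{uv-1}>1$; (3) $vab-1=(uv-1)X$; (4) $a+b+u+v=4+(v-1)\bigl[ab-(u-1)X\bigr]$. If $a,b,u,v$ satisfy (1)–(4), then the triple $(a,b,uv-1)$ is one of $(5,7,3)$, $(4,11,3)$, $(2,7,11)$. If $a,b,u,v$ satisfy (1)–(3), then the triple $(a,b,uv-1)$ is one of $(5,7,3)$, $(4,11,3)$, $(2,7,11)$, $(3,14,5)$, $(3,10,7)$, $(4,5,9)$, $(3,8,11)$, $(3,7,19)$, $(2,9,5)$, or $(2,3,6v-1)$ (with $u=6$). *)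

theory Defs
  imports Complex_Main
begin

definition pairwise_coprime3 :: "int \<Rightarrow> int \<Rightarrow> int \<Rightarrow> bool" where
  "pairwise_coprime3 x y z \<longleftrightarrow> coprime x y \<and> coprime x z \<and> coprime y z"

end

theory Submission
  imports Defs
begin

text \<open>Put \<open>k = u X - a b\<close>. Equation (3) says exactly \<open>v k = X - 1\<close>; as \<open>X \<ge> 1\<close> and \<open>v \<ge> 2\<close>
  this gives \<open>0 \<le> k\<close> and \<open>2 k \<le> X - 1\<close>. Together with \<open>u X = a b + k\<close> and \<open>u \<ge> 2\<close> it
  yields \<open>a b \<le> 3 a + 3 b - 1\<close>, hence \<open>a \<le> 5\<close>; the same estimate with \<open>u \<ge> 5\<close> is
  impossible unless \<open>(a, b) = (2, 3)\<close>, where \<open>X = 1\<close>, \<open>k = 0\<close> and so \<open>u = 6\<close>. Otherwise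
  \<open>u \<le> 4\<close>, and distinguishing \<open>v = 2\<close> from \<open>v \<ge> 3\<close> bounds \<open>b \<le> 14\<close>. For each of the
  remaining \<open>(a, b, u)\<close> equation (3) is linear in \<open>v\<close>, and coprimality removes all but
  the listed solutions.\<close>

lemma eq3_iff_cofactor_eq:
  fixes a b u v :: int
  shows "v * a * b - 1 = (u * v - 1) * (a * b - a - b)
     \<longleftrightarrow> v * (u * (a * b - a - b) - a * b) = a * b - a - b - 1"
  by (auto simp: algebra_simps)

lemma ab_minus_sum_pos:
  fixes a b :: int
  assumes "2 \<le> a" and "a < b"
  shows "1 \<le> a * b - a - b"
proof -
  have "1 * 2 \<le> (a - 1) * (b - 1)"
    by (rule mult_mono) (use assms in auto)
  then show ?thesis
    by (simp add: algebra_simps)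
qed

lemma cofactor_bounds:
  fixes v k n :: int
  assumes "2 \<le> v" and "v * k = n" and "0 \<le> n"
  shows "0 \<le> k" and "2 * k \<le> n" and "v = 2 \<or> 3 * k \<le> n"
proof -
  show k: "0 \<le> k"
    using assms zero_le_mult_iff[of v k] by auto
  show "2 * k \<le> n"
    using assms mult_right_mono[OF assms(1) k] by simp
  show "v = 2 \<or> 3 * k \<le> n"
  proof (cases "v = 2")
    case False
    then have "3 \<le> v"
      using assms(1) by simp
    from mult_right_mono[OF this k] show ?thesis
      using assms(2) by simp
  qed simp
qed

lemma eq3_cofactor_bounds:
  fixes a b u v :: int
  assumes "2 \<le> a" and "a < b" and v: "2 \<le> v"
    and eq3: "v * a * b - 1 = (u * v - 1) * (a * b - a - b)"
  defines "k \<equiv> u * (a * b - a - b) - a * b"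
  shows "0 \<le> k" and "2 * k \<le> a * b - a - b - 1"
    and "2 * k = a * b - a - b - 1 \<or> 3 * k \<le> a * b - a - b - 1"
proof -
  have vk: "v * k = a * b - a - b - 1"
    using eq3 unfolding eq3_iff_cofactor_eq k_def .
  moreover have "0 \<le> a * b - a - b - 1"
    using ab_minus_sum_pos[OF assms(1,2)] by simp
  ultimately show "0 \<le> k" and "2 * k \<le> a * b - a - b - 1"
    and "2 * k = a * b - a - b - 1 \<or> 3 * k \<le> a * b - a - b - 1"
    using cofactor_bounds[OF v vk] by auto
qed

lemma eq3_small_a_u:
  fixes a b u v :: int
  assumes a: "2 \<le> a" and ab: "a < b" and u: "2 \<le> u" and v: "2 \<le> v"
    and eq3: "v * a * b - 1 = (u * v - 1) * (a * b - a - b)"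
  shows "a \<le> 5" and "(a = 2 \<and> b = 3 \<and> u = 6) \<or> u \<le> 4"
proof -
  define X where "X = a * b - a - b"
  define k where "k = u * X - a * b"
  have X: "1 \<le> X"
    unfolding X_def using ab_minus_sum_pos[OF a ab] .
  have k: "0 \<le> k" and k2: "2 * k \<le> X - 1"
    using eq3_cofactor_bounds[OF a ab v eq3] unfolding X_def k_def by auto
  have uX: "u * X = a * b + k"
    by (simp add: k_def)
  have "2 * X \<le> u * X"
    using mult_right_mono[OF u, of X] X by simp
  then have ab_le: "a * b \<le> 3 * a + 3 * b - 1"
    using uX k2 X_def by linarith
  show "a \<le> 5"
  proof (rule ccontr)
    assume "\<not> a \<le> 5"
    then have "6 * b \<le> a * b"
      using mult_right_mono[of 6 a b] a ab by linarith
    then show False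
      using ab_le ab by linarith
  qed
  show "(a = 2 \<and> b = 3 \<and> u = 6) \<or> u \<le> 4"
  proof (cases "b = 3")
    case True
    then have "a = 2" "X = 1"
      using a ab by (auto simp: X_def)
    then have "u = 6"
      using k k2 uX True by simp
    with True \<open>a = 2\<close> show ?thesis
      by simp
  next
    case False
    then have b4: "4 \<le> b"
      using a ab by linarith
    show ?thesis
    proof (rule ccontr)
      assume "\<not> ?thesis"
      then have "5 * X \<le> u * X"
        using mult_right_mono[of 5 u X] X by linarith
      moreover have "2 * (7 * b - 9) \<le> a * (7 * b - 9)"
        using mult_right_mono[of 2 a "7 * b - 9"] a b4 by linarith
      ultimately show False
        using uX k2 X_def b4 by (simp add: algebra_simps)
    qed
  qed
qed

lemma eq3_small_b:
  fixes a b u v :: int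
  assumes a: "2 \<le> a" "a \<le> 5" and ab: "a < b" and u: "2 \<le> u" "u \<le> 4" and v: "2 \<le> v"
    and eq3: "v * a * b - 1 = (u * v - 1) * (a * b - a - b)"
  shows "b \<le> 14"
proof -
  define k where "k = u * (a * b - a - b) - a * b"
  have "0 \<le> k" and "2 * k \<le> a * b - a - b - 1"
    and "2 * k = a * b - a - b - 1 \<or> 3 * k \<le> a * b - a - b - 1"
    using eq3_cofactor_bounds[OF a(1) ab v eq3] unfolding k_def by auto
  moreover have "a = 2 \<or> a = 3 \<or> a = 4 \<or> a = 5" and "u = 2 \<or> u = 3 \<or> u = 4"
    using a u by auto
  ultimately show ?thesis
    using k_def ab by (elim disjE) (simp_all add: algebra_simps)
qed

lemma eq3_coprime_small_solutions:
  fixes a b u v :: int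
  assumes "2 \<le> a" "a \<le> 5" "a < b" "b \<le> 14" "2 \<le> u" "u \<le> 4" "2 \<le> v"
    and "pairwise_coprime3 a b (u * v - 1)"
    and "v * a * b - 1 = (u * v - 1) * (a * b - a - b)"
  shows "(a, b, u, v) \<in> {(2, 7, 3, 4), (2, 9, 3, 2), (3, 7, 2, 10), (3, 8, 2, 6), (3, 10, 2, 4),
           (3, 14, 2, 3), (4, 5, 2, 5), (4, 11, 2, 2), (5, 7, 2, 2)}"
proof -
  have "a \<in> {2, 3, 4, 5}" "u \<in> {2, 3, 4}"
    using assms(1,2,5,6) by auto
  moreover have "b \<in> {3, 4, 5, 6, 7, 8, 9, 10, 11, 12, 13, 14}"
    using assms(1,3,4) by simp presburger
  ultimately show ?thesis
    using assms(3,7-)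
    apply (simp only: insert_iff empty_iff)
    apply (elim disjE)
    apply (simp_all add: pairwise_coprime3_def)
    apply (elim conjE; presburger)+
    done
qed

lemma eq3_coprime_solutions:
  fixes a b u v :: int
  assumes "2 \<le> a" and "a < b" and "2 \<le> u" and "2 \<le> v"
    and cop: "pairwise_coprime3 a b (u * v - 1)"
    and eq3: "v * a * b - 1 = (u * v - 1) * (a * b - a - b)"
  shows "(a, b, u, v) \<in> {(2, 7, 3, 4), (2, 9, 3, 2), (3, 7, 2, 10), (3, 8, 2, 6), (3, 10, 2, 4),
           (3, 14, 2, 3), (4, 5, 2, 5), (4, 11, 2, 2), (5, 7, 2, 2)} \<or> (a = 2 \<and> b = 3 \<and> u = 6)"
proof -
  have "a \<le> 5" and "(a = 2 \<and> b = 3 \<and> u = 6) \<or> u \<le> 4"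
    using eq3_small_a_u[OF assms(1-4) eq3] by auto
  then consider "a = 2" "b = 3" "u = 6" | "a \<le> 5" "u \<le> 4"
    by blast
  then show ?thesis
  proof cases
    case 2
    then have "b \<le> 14"
      using eq3_small_b[OF assms(1) _ assms(2,3) _ assms(4) eq3] by simp
    with 2 show ?thesis
      using eq3_coprime_small_solutions[OF assms(1) _ assms(2) _ assms(3) _ assms(4) cop eq3] by simp
  qed simp
qed

theorem proposition3p3:
  fixes a b u v :: int
  assumes "b > a" and "a \<ge> 2" and "u \<ge> 2" and "v \<ge> 2"
  defines "X \<equiv> a * b - a - b"
  shows "(pairwise_coprime3 a b (u * v - 1)
          \<and> 1 / real_of_int a + 1 / real_of_int b + real_of_int v / real_of_int (u * v - 1) > 1
          \<and> v * a * b - 1 = (u * v - 1) * X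
          \<and> a + b + u + v = 4 + (v - 1) * (a * b - (u - 1) * X)
          \<longrightarrow> (a, b, u * v - 1) \<in> {(5, 7, 3), (4, 11, 3), (2, 7, 11)})
       \<and> (pairwise_coprime3 a b (u * v - 1)
          \<and> 1 / real_of_int a + 1 / real_of_int b + real_of_int v / real_of_int (u * v - 1) > 1
          \<and> v * a * b - 1 = (u * v - 1) * X
          \<longrightarrow> (a, b, u * v - 1) \<in> {(5, 7, 3), (4, 11, 3), (2, 7, 11), (3, 14, 5), (3, 10, 7),
                                     (4, 5, 9), (3, 8, 11), (3, 7, 19), (2, 9, 5)}
              \<or> ((a, b, u * v - 1) = (2, 3, 6 * v - 1) \<and> u = 6))"
proof (intro conjI impI; elim conjE)
  assume "pairwise_coprime3 a b (u * v - 1)" and "v * a * b - 1 = (u * v - 1) * X"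
    and "a + b + u + v = 4 + (v - 1) * (a * b - (u - 1) * X)"
  from eq3_coprime_solutions[OF assms(2,1,3,4) this(1,2)[unfolded X_def]] this(3)
  show "(a, b, u * v - 1) \<in> {(5, 7, 3), (4, 11, 3), (2, 7, 11)}"
    unfolding X_def by (simp only: insert_iff empty_iff prod.inject; elim disjE conjE; simp)
next
  assume "pairwise_coprime3 a b (u * v - 1)" and "v * a * b - 1 = (u * v - 1) * X"
  from eq3_coprime_solutions[OF assms(2,1,3,4) this[unfolded X_def]]
  show "(a, b, u * v - 1) \<in> {(5, 7, 3), (4, 11, 3), (2, 7, 11), (3, 14, 5), (3, 10, 7),
                                   (4, 5, 9), (3, 8, 11), (3, 7, 19), (2, 9, 5)}
            \<or> ((a, b, u * v - 1) = (2, 3, 6 * v - 1) \<and> u = 6)"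
    by (simp only: insert_iff empty_iff prod.inject; elim disjE conjE; simp)
qed

end
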